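(* Let $\Omega\subset\mathbb{R}^n$ be bounded. If $\varphi\in\Phi_{\mathrm w}(\Omega)$ satisfies condition (A1), then it satisfies conditions (A0) and (A2).
   Context: A function $f:[0,\infty)\to[0,\infty]$ is $a$-almost increasing ($a\ge1$) if $f(s)\le a f(t)$ for all $s\le t$. A function $\varphi:\Omega\times[0,\infty)\to[0,\infty]$ is a weak $\Phi$-function, $\varphi\in\Phi_{\mathrm w}(\Omega)$, if for a.e. $x\in\Omega$: $x\mapsto\varphi(x,|f(x)|)$ is measurable for every measurable $f:\Omega\to\mathbb{R}$; $t\mapsto\varphi(x,t)$ is increasing (non-decreasing); $\varphi(x,0)=\lim_{t\to0^+}\varphi(x,t)=0$ and $\lim_{t\to\infty}\varphi(x,t)=\infty$; and $t\mapsto\varphi(x,t)/t$ is $a$-almost increasing on $(0,\infty)$ with $a\ge1$ independent of $x$. The left-inverse is $\varphi^{-1}(x,\tau):=\inf\{t\ge0:\varphi(x,t)\ge\tau\}$. Condition (A0): there exists $\beta\in(0,1]$ with $\beta\le\varphi^{-1}(x,1)\le1/\beta$ for a.e. $x\in\Omega$. Condition (A1): there exists $\beta\in(0,1]$ such that for every ball $B\subset\mathbb{R}^n$ and a.e. $x,y\in\Omega\cap B$, $\beta\varphi^{-1}(x,\tau)\le\varphi^{-1}(y,\tau)$ for all $\tau\in[1,1/|B|]$. Condition (A2): for every $\sigma>0$ there exist $\beta\in(0,1]$ and $h\in L^1(\Omega)\cap L^\infty(\Omega)$, $h\ge0$, such that for a.e. $x,y\in\Omega$, $\beta\varphi^{-1}(x,\tau)\le\varphi^{-1}(y,\tau+h(x)+h(y))$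 for all $\tau\in[0,\sigma]$. *)

theory Defs
  imports "HOL-Analysis.Analysis"
begin

text \<open>Generalized Orlicz functions \<open>\<phi> :: 'a \<Rightarrow> real \<Rightarrow> ennreal\<close> on \<open>\<Omega> \<subseteq> \<real>\<^sup>n\<close>
  (the type \<open>'a\<close> is a Euclidean space); only arguments \<open>t \<ge> 0\<close> matter.
  "For a.e. x in \<Omega>" is rendered as \<open>AE x in lebesgue. x \<in> \<Omega> \<longrightarrow> \<dots>\<close>.\<close>

definition almost_increasing_quot :: "real \<Rightarrow> (real \<Rightarrow> ennreal) \<Rightarrow> bool" where
  "almost_increasing_quot a f \<longleftrightarrow>
     (\<forall>s t. 0 < s \<and> s \<le> t \<longrightarrow> f s / ennreal s \<le> ennreal a * (f t / ennreal t))"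

definition weak_Phi :: "'a::euclidean_space set \<Rightarrow> ('a \<Rightarrow> real \<Rightarrow> ennreal) \<Rightarrow> bool" where
  "weak_Phi \<Omega> \<phi> \<longleftrightarrow>
     (\<forall>f::'a \<Rightarrow> real. f \<in> borel_measurable (lebesgue_on \<Omega>) \<longrightarrow>
         (\<lambda>x. \<phi> x \<bar>f x\<bar>) \<in> borel_measurable (lebesgue_on \<Omega>)) \<and>
     (\<exists>a\<ge>1. AE x in lebesgue. x \<in> \<Omega> \<longrightarrow>
         (\<forall>s t. 0 \<le> s \<and> s \<le> t \<longrightarrow> \<phi> x s \<le> \<phi> x t) \<and>
         \<phi> x 0 = 0 \<and> (\<phi> x \<longlongrightarrow> 0) (at_right 0) \<and>
         (\<phi> x \<longlongrightarrow> \<infinity>) at_top \<and>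
         almost_increasing_quot a (\<phi> x))"

definition phi_inv :: "('a \<Rightarrow> real \<Rightarrow> ennreal) \<Rightarrow> 'a \<Rightarrow> real \<Rightarrow> real" where
  "phi_inv \<phi> x \<tau> = Inf {t. 0 \<le> t \<and> ennreal \<tau> \<le> \<phi> x t}"

definition cond_A0 :: "'a::euclidean_space set \<Rightarrow> ('a \<Rightarrow> real \<Rightarrow> ennreal) \<Rightarrow> bool" where
  "cond_A0 \<Omega> \<phi> \<longleftrightarrow> (\<exists>\<beta>. 0 < \<beta> \<and> \<beta> \<le> 1 \<and>
     (AE x in lebesgue. x \<in> \<Omega> \<longrightarrow> \<beta> \<le> phi_inv \<phi> x 1 \<and> phi_inv \<phi> x 1 \<le> 1 / \<beta>))"

definition cond_A1 :: "'a::euclidean_space set \<Rightarrow> ('a \<Rightarrow> real \<Rightarrow> ennreal) \<Rightarrow> bool" where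
  "cond_A1 \<Omega> \<phi> \<longleftrightarrow> (\<exists>\<beta>. 0 < \<beta> \<and> \<beta> \<le> 1 \<and>
     (\<forall>c r. 0 < r \<longrightarrow>
        (AE x in lebesgue. x \<in> \<Omega> \<inter> ball c r \<longrightarrow>
          (AE y in lebesgue. y \<in> \<Omega> \<inter> ball c r \<longrightarrow>
            (\<forall>\<tau>. 1 \<le> \<tau> \<and> \<tau> \<le> 1 / measure lebesgue (ball c r) \<longrightarrow>
               \<beta> * phi_inv \<phi> x \<tau> \<le> phi_inv \<phi> y \<tau>)))))"

definition cond_A2 :: "'a::euclidean_space set \<Rightarrow> ('a \<Rightarrow> real \<Rightarrow> ennreal) \<Rightarrow> bool" where
  "cond_A2 \<Omega> \<phi> \<longleftrightarrow> (\<forall>\<sigma>>0. \<exists>\<beta> h. 0 < \<beta> \<and> \<beta> \<le> 1 \<and>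
     integrable (lebesgue_on \<Omega>) h \<and>
     (\<exists>M. AE x in lebesgue_on \<Omega>. \<bar>h x\<bar> \<le> M) \<and>
     (\<forall>x\<in>\<Omega>. 0 \<le> h x) \<and>
     (AE x in lebesgue. x \<in> \<Omega> \<longrightarrow>
        (AE y in lebesgue. y \<in> \<Omega> \<longrightarrow>
          (\<forall>\<tau>. 0 \<le> \<tau> \<and> \<tau> \<le> \<sigma> \<longrightarrow>
             \<beta> * phi_inv \<phi> x \<tau> \<le> phi_inv \<phi> y (\<tau> + h x + h y)))))"

end

theory Submission
  imports Defs
begin

text \<open>Fix \<open>\<tau> \<ge> 1\<close> and a radius \<open>r\<close> with \<open>|B(c,r)| \<le> 1/\<tau>\<close> for all \<open>c\<close>. On each \<open>\<Omega> \<inter> B(c,r)\<close>,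
  (A1) says \<open>\<beta> \<phi>\<^sup>-\<^sup>1(x,\<tau>) \<le> \<phi>\<^sup>-\<^sup>1(y,\<tau>)\<close> for a.e. \<open>x, y\<close>; as \<open>\<phi>\<^sup>-\<^sup>1(\<cdot>,\<tau>)\<close> is positive and real-valued,
  this pins it a.e. between two positive constants. Finitely many such balls cover the bounded
  set \<open>\<Omega>\<close>, so \<open>\<phi>\<^sup>-\<^sup>1(\<cdot>,\<tau>) \<approx> 1\<close> a.e. on \<open>\<Omega>\<close> for every \<open>\<tau> \<ge> 1\<close>. At \<open>\<tau> = 1\<close> this is (A0). For (A2)
  take \<open>h \<equiv> 1/2\<close>, integrable because \<open>\<Omega>\<close> has finite measure: for \<open>0 \<le> \<tau> \<le> \<sigma>\<close>,
  \<open>\<phi>\<^sup>-\<^sup>1(x,\<tau>) \<le> \<phi>\<^sup>-\<^sup>1(x,max \<sigma> 1) \<lesssim> 1 \<lesssim> \<phi>\<^sup>-\<^sup>1(y,1) \<le> \<phi>\<^sup>-\<^sup>1(y,\<tau> + 1)\<close>.\<close>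

definition ae_pos_bounded :: "'a measure \<Rightarrow> 'a set \<Rightarrow> ('a \<Rightarrow> real) \<Rightarrow> bool" where
  "ae_pos_bounded M D g \<longleftrightarrow>
     (\<exists>\<beta>. 0 < \<beta> \<and> \<beta> \<le> 1 \<and> (AE x in M. x \<in> D \<longrightarrow> \<beta> \<le> g x \<and> g x \<le> 1 / \<beta>))"

lemma ae_pos_boundedI:
  assumes "0 < L" and bounds: "AE x in M. x \<in> D \<longrightarrow> L \<le> g x \<and> g x \<le> U"
  shows "ae_pos_bounded M D g"
proof -
  define \<beta> where "\<beta> = min 1 (min L (1 / max U 1))"
  have "0 < \<beta>" "\<beta> \<le> 1" "\<beta> \<le> L"
    using \<open>0 < L\<close> by (auto simp: \<beta>_def)
  moreover have "U \<le> 1 / \<beta>"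
  proof -
    have "\<beta> \<le> 1 / max U 1" by (simp add: \<beta>_def)
    with \<open>0 < \<beta>\<close> have "max U 1 \<le> 1 / \<beta>"
      by (simp add: le_divide_eq divide_le_eq mult.commute)
    then show ?thesis by simp
  qed
  ultimately show ?thesis
    unfolding ae_pos_bounded_def using bounds by (auto intro!: exI[of _ \<beta>] elim!: eventually_mono)
qed

lemma ae_pos_bounded_empty: "ae_pos_bounded M {} g"
  unfolding ae_pos_bounded_def by (intro exI[of _ 1]) simp

lemma ae_pos_bounded_subset:
  assumes "ae_pos_bounded M B g" and "A \<subseteq> B"
  shows "ae_pos_bounded M A g"
  using assms unfolding ae_pos_bounded_def by (auto elim!: eventually_mono)

lemma ae_pos_bounded_Un:
  assumes "ae_pos_bounded M A g" and "ae_pos_bounded M B g"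
  shows "ae_pos_bounded M (A \<union> B) g"
proof -
  obtain \<alpha> \<beta> where "0 < \<alpha>" "0 < \<beta>"
    and on_A: "AE x in M. x \<in> A \<longrightarrow> \<alpha> \<le> g x \<and> g x \<le> 1 / \<alpha>"
    and on_B: "AE x in M. x \<in> B \<longrightarrow> \<beta> \<le> g x \<and> g x \<le> 1 / \<beta>"
    using assms unfolding ae_pos_bounded_def by blast
  from on_A on_B have "AE x in M. x \<in> A \<union> B \<longrightarrow> min \<alpha> \<beta> \<le> g x \<and> g x \<le> max (1 / \<alpha>) (1 / \<beta>)"
    by eventually_elim auto
  then show ?thesis
    using \<open>0 < \<alpha>\<close> \<open>0 < \<beta>\<close> by (intro ae_pos_boundedI[of "min \<alpha> \<beta>"]) auto
qed

lemma ae_pos_bounded_UN: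
  assumes "finite K" and "\<And>c. c \<in> K \<Longrightarrow> ae_pos_bounded M (B c) g"
  shows "ae_pos_bounded M (\<Union>c\<in>K. B c) g"
  using assms by (induction K rule: finite_induct) (auto intro: ae_pos_bounded_empty ae_pos_bounded_Un)

lemma AE_AE_of_AE:
  assumes "AE x in M. x \<in> D \<longrightarrow> P x" and "AE y in M. y \<in> D \<longrightarrow> Q y"
    and "\<And>x y. P x \<Longrightarrow> Q y \<Longrightarrow> R x y"
  shows "AE x in M. x \<in> D \<longrightarrow> (AE y in M. y \<in> D \<longrightarrow> R x y)"
  using assms(1)
proof (rule eventually_mono, intro impI)
  fix x assume "x \<in> D \<longrightarrow> P x" and "x \<in> D"
  then have "P x" by blast
  with assms(2,3) show "AE y in M. y \<in> D \<longrightarrow> R x y"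
    by (auto elim!: eventually_mono)
qed

lemma exists_nat_not_AE_ge:
  fixes g :: "'a \<Rightarrow> real"
  assumes "\<not> (AE x in M. x \<notin> D)"
  shows "\<exists>N::nat. \<not> (AE y in M. y \<in> D \<longrightarrow> real N \<le> g y)"
proof (rule ccontr)
  assume "\<nexists>N::nat. \<not> (AE y in M. y \<in> D \<longrightarrow> real N \<le> g y)"
  then have "AE y in M. \<forall>N::nat. y \<in> D \<longrightarrow> real N \<le> g y"
    by (intro AE_all_countable[THEN iffD2]) simp
  then have "AE y in M. y \<notin> D"
    by (rule eventually_mono) (meson linorder_not_less reals_Archimedean2)
  with assms show False by simp
qed

lemma ae_pos_bounded_if_comparable:
  assumes "0 < \<beta>"
    and pos: "AE x in M. x \<in> D \<longrightarrow> 0 < g x"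
    and comparable: "AE x in M. x \<in> D \<longrightarrow> (AE y in M. y \<in> D \<longrightarrow> \<beta> * g x \<le> g y)"
  shows "ae_pos_bounded M D g"
proof (cases "AE x in M. x \<notin> D")
  case True
  then show ?thesis
    unfolding ae_pos_bounded_def by (auto intro!: exI[of _ 1] elim: eventually_mono)
next
  case False
  \<comment> \<open>Lower bound \<open>\<beta> g x\<^sub>0\<close> from one good point \<open>x\<^sub>0\<close>; upper bound \<open>N / \<beta>\<close> from a level \<open>N\<close>
    that \<open>g\<close> does not exceed a.e. on \<open>D\<close>.\<close>
  then have "\<exists>\<^sub>F x in ae_filter M. x \<in> D"
    by (simp add: frequently_def)
  moreover have "AE x in M. x \<in> D \<longrightarrow> 0 < g x \<and> (AE y in M. y \<in> D \<longrightarrow> \<beta> * g x \<le> g y)"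
    using pos comparable by eventually_elim auto
  ultimately have "\<exists>\<^sub>F x in ae_filter M. 0 < g x \<and> (AE y in M. y \<in> D \<longrightarrow> \<beta> * g x \<le> g y)"
    by (rule frequently_rev_mp)
  then obtain x\<^sub>0 where "0 < g x\<^sub>0" and lower: "AE y in M. y \<in> D \<longrightarrow> \<beta> * g x\<^sub>0 \<le> g y"
    by (blast dest: frequently_ex)
  obtain N :: nat where N: "\<not> (AE y in M. y \<in> D \<longrightarrow> real N \<le> g y)"
    using exists_nat_not_AE_ge False by blast
  have "AE x in M. x \<in> D \<longrightarrow> g x \<le> real N / \<beta>"
    using comparable
  proof (rule eventually_mono, intro impI)
    fix x assume "x \<in> D \<longrightarrow> (AE y in M. y \<in> D \<longrightarrow> \<beta> * g x \<le> g y)" and "x \<in> D"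
    then have above_x: "AE y in M. y \<in> D \<longrightarrow> \<beta> * g x \<le> g y" by blast
    have "\<beta> * g x \<le> real N"
    proof (rule ccontr)
      assume "\<not> \<beta> * g x \<le> real N"
      with above_x have "AE y in M. y \<in> D \<longrightarrow> real N \<le> g y"
        by (auto elim!: eventually_mono)
      with N show False ..
    qed
    with \<open>0 < \<beta>\<close> show "g x \<le> real N / \<beta>"
      by (simp add: field_simps)
  qed
  with lower have "AE x in M. x \<in> D \<longrightarrow> \<beta> * g x\<^sub>0 \<le> g x \<and> g x \<le> real N / \<beta>"
    by eventually_elim auto
  then show ?thesis
    using \<open>0 < \<beta>\<close> \<open>0 < g x\<^sub>0\<close> by (intro ae_pos_boundedI) auto
qed

lemma phi_inv_set_nonempty:
  fixes \<phi> :: "'a \<Rightarrow> real \<Rightarrow> ennreal"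
  assumes "(\<phi> x \<longlongrightarrow> \<infinity>) at_top"
  shows "{t. 0 \<le> t \<and> ennreal \<tau> \<le> \<phi> x t} \<noteq> {}"
proof -
  have "\<forall>\<^sub>F t in at_top. ennreal \<tau> < \<phi> x t"
    using assms by (rule order_tendstoD) simp
  then obtain N where N: "\<forall>t\<ge>N. ennreal \<tau> < \<phi> x t"
    unfolding eventually_at_top_linorder by blast
  have "max N 0 \<in> {t. 0 \<le> t \<and> ennreal \<tau> \<le> \<phi> x t}"
    using N[rule_format, of "max N 0"] by (simp add: order_less_imp_le)
  then show ?thesis by blast
qed

lemma phi_inv_mono:
  fixes \<phi> :: "'a \<Rightarrow> real \<Rightarrow> ennreal"
  assumes "(\<phi> x \<longlongrightarrow> \<infinity>) at_top" and "\<tau> \<le> \<tau>'"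
  shows "phi_inv \<phi> x \<tau> \<le> phi_inv \<phi> x \<tau>'"
proof -
  have "{t. 0 \<le> t \<and> ennreal \<tau>' \<le> \<phi> x t} \<subseteq> {t. 0 \<le> t \<and> ennreal \<tau> \<le> \<phi> x t}"
    using \<open>\<tau> \<le> \<tau>'\<close> by (auto intro: order_trans[OF ennreal_leI])
  moreover have "bdd_below {t. 0 \<le> t \<and> ennreal \<tau> \<le> \<phi> x t}"
    by (rule bdd_belowI[of _ 0]) simp
  ultimately show ?thesis
    unfolding phi_inv_def
    using cInf_superset_mono[OF phi_inv_set_nonempty[of \<phi> x \<tau>', OF assms(1)]] by blast
qed

lemma phi_inv_pos:
  fixes \<phi> :: "'a \<Rightarrow> real \<Rightarrow> ennreal"
  assumes "\<phi> x 0 = 0" and "(\<phi> x \<longlongrightarrow> 0) (at_right 0)" and "(\<phi> x \<longlongrightarrow> \<infinity>) at_top"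
    and "0 < \<tau>"
  shows "0 < phi_inv \<phi> x \<tau>"
proof -
  have "\<forall>\<^sub>F t in at_right 0. \<phi> x t < ennreal \<tau>"
    using assms(2) by (rule order_tendstoD) (use \<open>0 < \<tau>\<close> in simp)
  then obtain b where "0 < b" and below: "\<And>t. 0 < t \<Longrightarrow> t < b \<Longrightarrow> \<phi> x t < ennreal \<tau>"
    by (auto simp: eventually_at_right_field)
  have "b \<le> phi_inv \<phi> x \<tau>"
    unfolding phi_inv_def
  proof (rule cInf_greatest)
    show "{t. 0 \<le> t \<and> ennreal \<tau> \<le> \<phi> x t} \<noteq> {}"
      using phi_inv_set_nonempty[of \<phi> x, OF assms(3)] .
  next
    fix t assume t: "t \<in> {t. 0 \<le> t \<and> ennreal \<tau> \<le> \<phi> x t}"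
    with assms(1) \<open>0 < \<tau>\<close> have "t \<noteq> 0" by auto
    show "b \<le> t"
    proof (rule ccontr)
      assume "\<not> b \<le> t"
      with t \<open>t \<noteq> 0\<close> have "\<phi> x t < ennreal \<tau>"
        by (intro below) auto
      with t show False by (auto dest: leD)
    qed
  qed
  with \<open>0 < b\<close> show ?thesis by simp
qed

lemma weak_Phi_AE_limits:
  assumes "weak_Phi \<Omega> \<phi>"
  shows "AE x in lebesgue. x \<in> \<Omega> \<longrightarrow>
           \<phi> x 0 = 0 \<and> (\<phi> x \<longlongrightarrow> 0) (at_right 0) \<and> (\<phi> x \<longlongrightarrow> \<infinity>) at_top"
  using assms unfolding weak_Phi_def by (auto elim!: eventually_mono)

lemma small_radius_measure_ball_le:
  assumes "0 < \<epsilon>"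
  obtains r where "0 < r" and "\<And>c::'a::euclidean_space. measure lebesgue (ball c r) \<le> \<epsilon>"
proof -
  define C where "C = measure lborel (ball (0::'a) 1)"
  have "((\<lambda>r. r ^ DIM('a) * C) \<longlongrightarrow> 0 ^ DIM('a) * C) (at_right 0)"
    by (intro tendsto_intros)
  then have "\<forall>\<^sub>F r in at_right 0. r ^ DIM('a) * C < \<epsilon>"
    using assms by (intro order_tendstoD(2)) (simp_all add: zero_power[OF DIM_positive])
  then obtain b where "0 < b" and small: "\<forall>r>0. r < b \<longrightarrow> r ^ DIM('a) * C < \<epsilon>"
    unfolding eventually_at_right_field by blast
  show ?thesis
  proof (rule that)
    show "0 < b / 2" using \<open>0 < b\<close> by simp
    fix c :: 'a
    have "measure lebesgue (ball c (b / 2)) = measure lborel (ball c (b / 2))"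
      by simp
    also have "\<dots> = (b / 2) ^ DIM('a) * C"
      unfolding C_def by (rule content_ball_conv_unit_ball) (use \<open>0 < b\<close> in simp)
    also have "\<dots> < \<epsilon>"
      using \<open>0 < b\<close> by (intro small[rule_format]) simp_all
    finally show "measure lebesgue (ball c (b / 2)) \<le> \<epsilon>" by simp
  qed
qed

lemma bounded_finite_ball_cover:
  fixes \<Omega> :: "'a::heine_borel set"
  assumes "bounded \<Omega>" and "0 < r"
  obtains K where "finite K" and "\<Omega> \<subseteq> (\<Union>c\<in>K. ball c r)"
proof -
  have "\<exists>K. finite K \<and> closure \<Omega> \<subseteq> (\<Union>c\<in>K. ball c r)"
  proof (rule compactE_image[of "closure \<Omega>" "closure \<Omega>" "\<lambda>c. ball c r"])
    show "compact (closure \<Omega>)"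
      using assms(1) by (rule compact_closure[THEN iffD2])
    show "closure \<Omega> \<subseteq> (\<Union>c\<in>closure \<Omega>. ball c r)"
      using \<open>0 < r\<close> by auto
  qed auto
  then obtain K where "finite K" and "closure \<Omega> \<subseteq> (\<Union>c\<in>K. ball c r)"
    by blast
  with closure_subset[of \<Omega>] show ?thesis
    by (intro that) auto
qed

text \<open>\<open>\<Omega>\<close> need not be Lebesgue measurable, so \<open>finite_measure_lebesgue_on\<close> does not apply.\<close>

lemma finite_measure_lebesgue_on_bounded:
  fixes \<Omega> :: "'a::euclidean_space set"
  assumes "bounded \<Omega>"
  shows "finite_measure (lebesgue_on \<Omega>)"
proof
  obtain c e where "\<Omega> \<subseteq> cball c e"
    using assms by (auto simp: bounded_subset_cball)
  have "emeasure (lebesgue_on \<Omega>) (space (lebesgue_on \<Omega>)) \<le> emeasure lebesgue \<Omega>"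
    unfolding space_restrict_space by (simp add: restrict_space_def emeasure_measure_of_conv)
  also have "\<dots> \<le> emeasure lebesgue (cball c e)"
    using \<open>\<Omega> \<subseteq> cball c e\<close> by (intro emeasure_mono) auto
  also have "\<dots> < \<infinity>"
    using emeasure_bounded_finite[of "cball c e"] by simp
  finally show "emeasure (lebesgue_on \<Omega>) (space (lebesgue_on \<Omega>)) \<noteq> \<infinity>" by simp
qed

lemma ae_pos_bounded_phi_inv_ball:
  fixes \<Omega> :: "'a::euclidean_space set"
  assumes "weak_Phi \<Omega> \<phi>" and "cond_A1 \<Omega> \<phi>"
    and "0 < r" and "1 \<le> \<tau>" and "\<tau> \<le> 1 / measure lebesgue (ball c r)"
  shows "ae_pos_bounded lebesgue (\<Omega> \<inter> ball c r) (\<lambda>x. phi_inv \<phi> x \<tau>)"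
proof -
  obtain \<beta> where "0 < \<beta>" and A1: "\<forall>c r. 0 < r \<longrightarrow>
      (AE x in lebesgue. x \<in> \<Omega> \<inter> ball c r \<longrightarrow>
        (AE y in lebesgue. y \<in> \<Omega> \<inter> ball c r \<longrightarrow>
          (\<forall>\<tau>. 1 \<le> \<tau> \<and> \<tau> \<le> 1 / measure lebesgue (ball c r) \<longrightarrow>
             \<beta> * phi_inv \<phi> x \<tau> \<le> phi_inv \<phi> y \<tau>)))"
    using assms(2) unfolding cond_A1_def by blast
  show ?thesis
  proof (rule ae_pos_bounded_if_comparable[OF \<open>0 < \<beta>\<close>])
    show "AE x in lebesgue. x \<in> \<Omega> \<inter> ball c r \<longrightarrow> 0 < phi_inv \<phi> x \<tau>"
      using weak_Phi_AE_limits[OF assms(1)]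
    proof (rule eventually_mono, intro impI)
      fix x assume "x \<in> \<Omega> \<longrightarrow>
          \<phi> x 0 = 0 \<and> (\<phi> x \<longlongrightarrow> 0) (at_right 0) \<and> (\<phi> x \<longlongrightarrow> \<infinity>) at_top"
        and "x \<in> \<Omega> \<inter> ball c r"
      with \<open>1 \<le> \<tau>\<close> show "0 < phi_inv \<phi> x \<tau>"
        by (intro phi_inv_pos) auto
    qed
    show "AE x in lebesgue. x \<in> \<Omega> \<inter> ball c r \<longrightarrow>
        (AE y in lebesgue. y \<in> \<Omega> \<inter> ball c r \<longrightarrow> \<beta> * phi_inv \<phi> x \<tau> \<le> phi_inv \<phi> y \<tau>)"
      using A1[rule_format, OF \<open>0 < r\<close>, of c]
    proof (rule eventually_mono, intro impI)
      fix x assume "x \<in> \<Omega> \<inter> ball c r \<longrightarrow>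
          (AE y in lebesgue. y \<in> \<Omega> \<inter> ball c r \<longrightarrow>
            (\<forall>\<tau>. 1 \<le> \<tau> \<and> \<tau> \<le> 1 / measure lebesgue (ball c r) \<longrightarrow>
               \<beta> * phi_inv \<phi> x \<tau> \<le> phi_inv \<phi> y \<tau>))"
        and "x \<in> \<Omega> \<inter> ball c r"
      then show "AE y in lebesgue. y \<in> \<Omega> \<inter> ball c r \<longrightarrow> \<beta> * phi_inv \<phi> x \<tau> \<le> phi_inv \<phi> y \<tau>"
        using assms(4,5) by (auto elim!: eventually_mono)
    qed
  qed
qed

lemma ae_pos_bounded_phi_inv:
  fixes \<Omega> :: "'a::euclidean_space set"
  assumes "bounded \<Omega>" and "weak_Phi \<Omega> \<phi>" and "cond_A1 \<Omega> \<phi>" and "1 \<le> \<tau>"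
  shows "ae_pos_bounded lebesgue \<Omega> (\<lambda>x. phi_inv \<phi> x \<tau>)"
proof -
  obtain r where "0 < r" and small: "\<And>c::'a. measure lebesgue (ball c r) \<le> 1 / \<tau>"
    using small_radius_measure_ball_le[of "1 / \<tau>"] \<open>1 \<le> \<tau>\<close> by auto
  obtain K where "finite K" and cover: "\<Omega> \<subseteq> (\<Union>c\<in>K. ball c r)"
    by (rule bounded_finite_ball_cover[OF \<open>bounded \<Omega>\<close> \<open>0 < r\<close>])
  have "ae_pos_bounded lebesgue (\<Omega> \<inter> ball c r) (\<lambda>x. phi_inv \<phi> x \<tau>)" for c
  proof (rule ae_pos_bounded_phi_inv_ball[OF assms(2,3) \<open>0 < r\<close> \<open>1 \<le> \<tau>\<close>])
    have "0 < measure lebesgue (ball c r)"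
      using content_ball_pos[OF \<open>0 < r\<close>, of c] by simp
    with small[of c] \<open>1 \<le> \<tau>\<close> show "\<tau> \<le> 1 / measure lebesgue (ball c r)"
      by (simp add: field_simps)
  qed
  then have "ae_pos_bounded lebesgue (\<Union>c\<in>K. \<Omega> \<inter> ball c r) (\<lambda>x. phi_inv \<phi> x \<tau>)"
    using \<open>finite K\<close> by (intro ae_pos_bounded_UN)
  moreover have "\<Omega> \<subseteq> (\<Union>c\<in>K. \<Omega> \<inter> ball c r)"
    using cover by blast
  ultimately show ?thesis
    by (rule ae_pos_bounded_subset)
qed

lemma AE_phi_inv_bounds_around_level:
  fixes \<phi> :: "'a \<Rightarrow> real \<Rightarrow> ennreal"
  assumes infinity: "AE x in M. x \<in> \<Omega> \<longrightarrow> (\<phi> x \<longlongrightarrow> \<infinity>) at_top"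
    and "ae_pos_bounded M \<Omega> (\<lambda>x. phi_inv \<phi> x \<tau>\<^sub>0)"
  obtains \<beta> where "0 < \<beta>" and "\<beta> \<le> 1"
    and "AE x in M. x \<in> \<Omega> \<longrightarrow>
      (\<forall>\<tau>\<le>\<tau>\<^sub>0. phi_inv \<phi> x \<tau> \<le> 1 / \<beta>) \<and> (\<forall>\<tau>\<ge>\<tau>\<^sub>0. \<beta> \<le> phi_inv \<phi> x \<tau>)"
proof -
  obtain \<beta> where "0 < \<beta>" "\<beta> \<le> 1"
    and bounds: "AE x in M. x \<in> \<Omega> \<longrightarrow> \<beta> \<le> phi_inv \<phi> x \<tau>\<^sub>0 \<and> phi_inv \<phi> x \<tau>\<^sub>0 \<le> 1 / \<beta>"
    using assms(2) unfolding ae_pos_bounded_def by blast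
  from bounds infinity have "AE x in M. x \<in> \<Omega> \<longrightarrow>
      (\<forall>\<tau>\<le>\<tau>\<^sub>0. phi_inv \<phi> x \<tau> \<le> 1 / \<beta>) \<and> (\<forall>\<tau>\<ge>\<tau>\<^sub>0. \<beta> \<le> phi_inv \<phi> x \<tau>)"
  proof eventually_elim
    case (elim x)
    show ?case
    proof (intro impI conjI allI)
      fix \<tau> assume "x \<in> \<Omega>" and "\<tau> \<le> \<tau>\<^sub>0"
      with elim have "phi_inv \<phi> x \<tau> \<le> phi_inv \<phi> x \<tau>\<^sub>0"
        by (intro phi_inv_mono) auto
      with elim \<open>x \<in> \<Omega>\<close> show "phi_inv \<phi> x \<tau> \<le> 1 / \<beta>" by linarith
    next
      fix \<tau> assume "x \<in> \<Omega>" and "\<tau>\<^sub>0 \<le> \<tau>"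
      with elim have "phi_inv \<phi> x \<tau>\<^sub>0 \<le> phi_inv \<phi> x \<tau>"
        by (intro phi_inv_mono) auto
      with elim \<open>x \<in> \<Omega>\<close> show "\<beta> \<le> phi_inv \<phi> x \<tau>" by linarith
    qed
  qed
  with \<open>0 < \<beta>\<close> \<open>\<beta> \<le> 1\<close> that show ?thesis by blast
qed

lemma cond_A2_if_constant_shift:
  fixes \<Omega> :: "'a::euclidean_space set"
  assumes "bounded \<Omega>" and "0 \<le> c"
    and comparable: "\<And>\<sigma>. 0 < \<sigma> \<Longrightarrow> \<exists>\<beta>. 0 < \<beta> \<and> \<beta> \<le> 1 \<and>
      (AE x in lebesgue. x \<in> \<Omega> \<longrightarrow> (AE y in lebesgue. y \<in> \<Omega> \<longrightarrow>
        (\<forall>\<tau>. 0 \<le> \<tau> \<and> \<tau> \<le> \<sigma> \<longrightarrow> \<beta> * phi_inv \<phi> x \<tau> \<le> phi_inv \<phi> y (\<tau> + c + c))))"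
  shows "cond_A2 \<Omega> \<phi>"
  unfolding cond_A2_def
proof (intro allI impI)
  fix \<sigma> :: real assume "0 < \<sigma>"
  then obtain \<beta> where "0 < \<beta>" "\<beta> \<le> 1" and shifted: "AE x in lebesgue. x \<in> \<Omega> \<longrightarrow>
      (AE y in lebesgue. y \<in> \<Omega> \<longrightarrow>
        (\<forall>\<tau>. 0 \<le> \<tau> \<and> \<tau> \<le> \<sigma> \<longrightarrow> \<beta> * phi_inv \<phi> x \<tau> \<le> phi_inv \<phi> y (\<tau> + c + c)))"
    using comparable by blast
  show "\<exists>\<beta> h. 0 < \<beta> \<and> \<beta> \<le> 1 \<and> integrable (lebesgue_on \<Omega>) h \<and>
      (\<exists>M. AE x in lebesgue_on \<Omega>. \<bar>h x\<bar> \<le> M) \<and> (\<forall>x\<in>\<Omega>. 0 \<le> h x) \<and>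
      (AE x in lebesgue. x \<in> \<Omega> \<longrightarrow> (AE y in lebesgue. y \<in> \<Omega> \<longrightarrow>
        (\<forall>\<tau>. 0 \<le> \<tau> \<and> \<tau> \<le> \<sigma> \<longrightarrow> \<beta> * phi_inv \<phi> x \<tau> \<le> phi_inv \<phi> y (\<tau> + h x + h y))))"
  proof (rule exI[of _ \<beta>], rule exI[of _ "\<lambda>_. c"], intro conjI)
    show "integrable (lebesgue_on \<Omega>) (\<lambda>_. c)"
      using finite_measure_lebesgue_on_bounded[OF \<open>bounded \<Omega>\<close>] by (rule finite_measure.integrable_const)
    show "\<exists>M. AE x in lebesgue_on \<Omega>. \<bar>c\<bar> \<le> M"
      by (rule exI[of _ "\<bar>c\<bar>"]) simp
  qed (use \<open>0 < \<beta>\<close> \<open>\<beta> \<le> 1\<close> \<open>0 \<le> c\<close> shifted in simp_all)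
qed

lemma cond_A2_if_phi_inv_bounded:
  fixes \<Omega> :: "'a::euclidean_space set"
  assumes "bounded \<Omega>"
    and infinity: "AE x in lebesgue. x \<in> \<Omega> \<longrightarrow> (\<phi> x \<longlongrightarrow> \<infinity>) at_top"
    and bounds: "\<And>\<tau>. 1 \<le> \<tau> \<Longrightarrow> ae_pos_bounded lebesgue \<Omega> (\<lambda>x. phi_inv \<phi> x \<tau>)"
  shows "cond_A2 \<Omega> \<phi>"
proof (rule cond_A2_if_constant_shift[OF \<open>bounded \<Omega>\<close>, of "1 / 2"])
  fix \<sigma> :: real
  obtain \<beta>\<^sub>1 where "0 < \<beta>\<^sub>1" "\<beta>\<^sub>1 \<le> 1"
    and lower: "AE y in lebesgue. y \<in> \<Omega> \<longrightarrow>
      (\<forall>\<tau>\<le>1. phi_inv \<phi> y \<tau> \<le> 1 / \<beta>\<^sub>1) \<and> (\<forall>\<tau>\<ge>1. \<beta>\<^sub>1 \<le> phi_inv \<phi> y \<tau>)"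
    using AE_phi_inv_bounds_around_level[OF infinity bounds[of 1]] by auto
  obtain \<beta>\<^sub>2 where "0 < \<beta>\<^sub>2" "\<beta>\<^sub>2 \<le> 1"
    and upper: "AE x in lebesgue. x \<in> \<Omega> \<longrightarrow>
      (\<forall>\<tau>\<le>max \<sigma> 1. phi_inv \<phi> x \<tau> \<le> 1 / \<beta>\<^sub>2) \<and> (\<forall>\<tau>\<ge>max \<sigma> 1. \<beta>\<^sub>2 \<le> phi_inv \<phi> x \<tau>)"
    using AE_phi_inv_bounds_around_level[OF infinity bounds[of "max \<sigma> 1"]] by auto
  \<comment> \<open>The shift \<open>1/2 + 1/2\<close> moves every \<open>\<tau> \<ge> 0\<close> into the range \<open>\<tau> \<ge> 1\<close> of the lower bound.\<close>
  have comparable: "AE x in lebesgue. x \<in> \<Omega> \<longrightarrow> (AE y in lebesgue. y \<in> \<Omega> \<longrightarrow>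
      (\<forall>\<tau>. 0 \<le> \<tau> \<and> \<tau> \<le> \<sigma> \<longrightarrow> \<beta>\<^sub>1 * \<beta>\<^sub>2 * phi_inv \<phi> x \<tau> \<le> phi_inv \<phi> y (\<tau> + 1 / 2 + 1 / 2)))"
    using upper lower
  proof (rule AE_AE_of_AE, intro allI impI)
    fix x y \<tau>
    assume x: "(\<forall>\<tau>\<le>max \<sigma> 1. phi_inv \<phi> x \<tau> \<le> 1 / \<beta>\<^sub>2) \<and> (\<forall>\<tau>\<ge>max \<sigma> 1. \<beta>\<^sub>2 \<le> phi_inv \<phi> x \<tau>)"
      and y: "(\<forall>\<tau>\<le>1. phi_inv \<phi> y \<tau> \<le> 1 / \<beta>\<^sub>1) \<and> (\<forall>\<tau>\<ge>1. \<beta>\<^sub>1 \<le> phi_inv \<phi> y \<tau>)"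
      and \<tau>: "0 \<le> \<tau> \<and> \<tau> \<le> \<sigma>"
    have "\<beta>\<^sub>1 * \<beta>\<^sub>2 * phi_inv \<phi> x \<tau> \<le> \<beta>\<^sub>1 * \<beta>\<^sub>2 * (1 / \<beta>\<^sub>2)"
      using x \<tau> \<open>0 < \<beta>\<^sub>1\<close> \<open>0 < \<beta>\<^sub>2\<close> by (intro mult_left_mono) auto
    also have "\<dots> = \<beta>\<^sub>1"
      using \<open>0 < \<beta>\<^sub>2\<close> by simp
    also have "\<dots> \<le> phi_inv \<phi> y (\<tau> + 1 / 2 + 1 / 2)"
      using y \<tau> by simp
    finally show "\<beta>\<^sub>1 * \<beta>\<^sub>2 * phi_inv \<phi> x \<tau> \<le> phi_inv \<phi> y (\<tau> + 1 / 2 + 1 / 2)" .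
  qed
  show "\<exists>\<beta>. 0 < \<beta> \<and> \<beta> \<le> 1 \<and>
      (AE x in lebesgue. x \<in> \<Omega> \<longrightarrow> (AE y in lebesgue. y \<in> \<Omega> \<longrightarrow>
        (\<forall>\<tau>. 0 \<le> \<tau> \<and> \<tau> \<le> \<sigma> \<longrightarrow> \<beta> * phi_inv \<phi> x \<tau> \<le> phi_inv \<phi> y (\<tau> + 1 / 2 + 1 / 2))))"
  proof (intro exI[of _ "\<beta>\<^sub>1 * \<beta>\<^sub>2"] conjI)
    show "0 < \<beta>\<^sub>1 * \<beta>\<^sub>2" and "\<beta>\<^sub>1 * \<beta>\<^sub>2 \<le> 1"
      using \<open>0 < \<beta>\<^sub>1\<close> \<open>\<beta>\<^sub>1 \<le> 1\<close> \<open>0 < \<beta>\<^sub>2\<close> \<open>\<beta>\<^sub>2 \<le> 1\<close> by (auto intro: mult_le_one)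
  qed (fact comparable)
qed simp

lemma cond_A0_iff_ae_pos_bounded:
  "cond_A0 \<Omega> \<phi> \<longleftrightarrow> ae_pos_bounded lebesgue \<Omega> (\<lambda>x. phi_inv \<phi> x 1)"
  unfolding cond_A0_def ae_pos_bounded_def ..

theorem proposition3p2:
  fixes \<Omega> :: "'a::euclidean_space set" and \<phi> :: "'a \<Rightarrow> real \<Rightarrow> ennreal"
  assumes "bounded \<Omega>" and "weak_Phi \<Omega> \<phi>" and "cond_A1 \<Omega> \<phi>"
  shows "cond_A0 \<Omega> \<phi> \<and> cond_A2 \<Omega> \<phi>"
proof
  have bounds: "\<And>\<tau>. 1 \<le> \<tau> \<Longrightarrow> ae_pos_bounded lebesgue \<Omega> (\<lambda>x. phi_inv \<phi> x \<tau>)"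
    using assms by (rule ae_pos_bounded_phi_inv)
  show "cond_A0 \<Omega> \<phi>"
    using bounds[of 1] by (simp add: cond_A0_iff_ae_pos_bounded)
  have "AE x in lebesgue. x \<in> \<Omega> \<longrightarrow> (\<phi> x \<longlongrightarrow> \<infinity>) at_top"
    using weak_Phi_AE_limits[OF assms(2)] by (rule eventually_mono) simp
  with \<open>bounded \<Omega>\<close> show "cond_A2 \<Omega> \<phi>"
    using bounds by (rule cond_A2_if_phi_inv_bounded)
qed

end
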